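(* Let $\{X_\alpha:\alpha\in\mathscr A\}$ be a family of Banach spaces and $\kappa$ an infinite cardinal. If for every $r\in(0,1)$ there are infinitely many $\alpha\in\mathscr A$ such that $X_\alpha$ is $(r,r)$-$\mathrm{SQ}_{<\kappa}$, then $\ell_\infty(\mathscr A,X_\alpha)$ is $(<1,1)$-$\mathrm{SQ}_{<\kappa}$.
   Context: $\ell_\infty(\mathscr A,X_\alpha)$ is the Banach space of functions $x$ on $\mathscr A$ with $x(\alpha)\in X_\alpha$ and $\|x\|_\infty=\sup_\alpha\|x(\alpha)\|<\infty$. For $r,s\in(0,1]$, a Banach space $Z$ is $(r,s)$-$\mathrm{SQ}_{<\kappa}$ if for every set $A\subset S_Z$ with $|A|<\kappa$ there exists $y\in S_Z$ with $\|rx\pm sy\|\le 1$ for all $x\in A$. $Z$ is $(<1,1)$-$\mathrm{SQ}_{<\kappa}$ if it is $(t,1)$-$\mathrm{SQ}_{<\kappa}$ for every $t\in(0,1)$. *)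

theory Defs
  imports "HOL-Analysis.Analysis"
begin

text \<open>Generic (r,s)-SQ_{<kappa} property for a normed space given by a carrier Z,
a norm function nrm and a linear-combination operation lc, where
lc a x b y stands for a x + b y.  The cardinal kappa is a cardinal order k
(in the sense of Main's BNF cardinal library), and |A| < kappa is
card_of A strictly below k.\<close>

definition SQ_gen ::
  "real \<Rightarrow> real \<Rightarrow> 'c rel \<Rightarrow> 'v set \<Rightarrow> ('v \<Rightarrow> real)
     \<Rightarrow> (real \<Rightarrow> 'v \<Rightarrow> real \<Rightarrow> 'v \<Rightarrow> 'v) \<Rightarrow> bool" where
  "SQ_gen r s k Z nrm lc \<longleftrightarrow>
     (\<forall>A. A \<subseteq> {z \<in> Z. nrm z = 1} \<and> (card_of A, k) \<in> ordLess \<longrightarrow>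
        (\<exists>y \<in> Z. nrm y = 1 \<and>
           (\<forall>x \<in> A. nrm (lc r x s y) \<le> 1 \<and> nrm (lc r x (- s) y) \<le> 1)))"

text \<open>A Banach space X realised as a closed linear subspace of a Banach type, with
the inherited norm.\<close>

definition SQ :: "real \<Rightarrow> real \<Rightarrow> 'c rel \<Rightarrow> 'b::real_normed_vector set \<Rightarrow> bool" where
  "SQ r s k X = SQ_gen r s k X norm (\<lambda>a x b y. a *\<^sub>R x + b *\<^sub>R y)"

definition linf :: "'a set \<Rightarrow> ('a \<Rightarrow> 'b::real_normed_vector set) \<Rightarrow> ('a \<Rightarrow> 'b) set" where
  "linf I X = {x. (\<forall>\<alpha>\<in>I. x \<alpha> \<in> X \<alpha>) \<and> (\<forall>\<alpha>. \<alpha> \<notin> I \<longrightarrow> x \<alpha> = 0)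
                  \<and> bounded (x ` I)}"

definition linf_norm :: "'a set \<Rightarrow> ('a \<Rightarrow> 'b::real_normed_vector) \<Rightarrow> real" where
  "linf_norm I x = (SUP \<alpha>\<in>I. norm (x \<alpha>))"

definition SQ_linf :: "real \<Rightarrow> real \<Rightarrow> 'c rel \<Rightarrow> 'a set \<Rightarrow> ('a \<Rightarrow> 'b::real_normed_vector set) \<Rightarrow> bool" where
  "SQ_linf r s k I X = SQ_gen r s k (linf I X) (linf_norm I)
      (\<lambda>a x b y. (\<lambda>\<alpha>. a *\<^sub>R x \<alpha> + b *\<^sub>R y \<alpha>))"

definition SQ_lt1_1_linf :: "'c rel \<Rightarrow> 'a set \<Rightarrow> ('a \<Rightarrow> 'b::real_normed_vector set) \<Rightarrow> bool" where
  "SQ_lt1_1_linf k I X \<longleftrightarrow> (\<forall>t. 0 < t \<and> t < 1 \<longrightarrow> SQ_linf t 1 k I X)"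

end

theory Submission
  imports Defs
begin

(* Fix t < 1 and choose distinct indices alpha_n such that X alpha_n is (r_n,r_n)-SQ, where r_n
   increases to 1.  For fewer than kappa unit vectors x of l_infty, the coordinates x alpha_n lie in
   the unit ball of X alpha_n, and the SQ property there, applied to their normalisations, gives
   y_n with r_n <= norm y_n <= 1 and norm (t x alpha_n +- y_n) <= 1.  The vector equal to y_n at
   alpha_n and to 0 elsewhere then has supremum norm 1 and witnesses the (t,1)-SQ property. *)

lemma injective_choice_from_infinite_family:
  assumes "\<And>n. infinite (B n)"
  obtains f :: "nat \<Rightarrow> 'a" where "inj f" "\<And>n. f n \<in> B n"
proof -
  define pick :: "'a set \<Rightarrow> nat \<Rightarrow> 'a" where "pick F n = (SOME a. a \<in> B n - F)" for F n
  have pick: "pick F n \<in> B n - F" if "finite F" for F n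
  proof -
    have "B n - F \<noteq> {}" using assms[of n] that by (metis Diff_eq_empty_iff finite_subset)
    then show ?thesis unfolding pick_def by (rule some_in_eq[THEN iffD2])
  qed
  define F where "F = rec_nat {} (\<lambda>n S. insert (pick S n) S)"
  define f where "f n = pick (F n) n" for n
  have F_eq: "F n = f ` {..<n}" for n
    by (induction n) (simp_all add: F_def f_def lessThan_Suc)
  have f: "f n \<in> B n - f ` {..<n}" for n
  proof -
    have "finite (F n)" by (simp add: F_eq)
    from pick[OF this, of n] show ?thesis unfolding f_def[symmetric] unfolding F_eq .
  qed
  have "inj f"
  proof (rule linorder_inj_onI')
    fix i j :: nat assume "i < j"
    then have "f i \<in> f ` {..<j}" by simp
    with f[of j] show "f i \<noteq> f j" by auto
  qed
  with f that show thesis by blast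
qed

lemma norm_scaleR_add_le_one:
  fixes u y :: "'b::real_normed_vector"
  assumes "norm y = 1" "norm (r *\<^sub>R u + r *\<^sub>R y) \<le> 1"
    and "0 < r" "0 \<le> a" "a \<le> s" "a / r + (s - a) \<le> 1"
  shows "norm (a *\<^sub>R u + s *\<^sub>R y) \<le> 1"
proof -
  have "a *\<^sub>R u + s *\<^sub>R y = (a / r) *\<^sub>R (r *\<^sub>R u + r *\<^sub>R y) + (s - a) *\<^sub>R y"
    using \<open>0 < r\<close> by (simp add: algebra_simps)
  also have "norm \<dots> \<le> (a / r) * norm (r *\<^sub>R u + r *\<^sub>R y) + (s - a)"
    using norm_triangle_ineq[of "(a / r) *\<^sub>R (r *\<^sub>R u + r *\<^sub>R y)" "(s - a) *\<^sub>R y"] assms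
    by simp
  also have "\<dots> \<le> a / r + (s - a)"
    using mult_left_le[OF assms(2), of "a / r"] assms by simp
  finally show ?thesis using assms by linarith
qed

lemma SQE:
  assumes "SQ r s k Z" "A \<subseteq> {z \<in> Z. norm z = 1}" "(card_of A, k) \<in> ordLess"
  obtains y where "y \<in> Z" "norm y = 1"
    "\<And>x. x \<in> A \<Longrightarrow> norm (r *\<^sub>R x + s *\<^sub>R y) \<le> 1 \<and> norm (r *\<^sub>R x + (- s) *\<^sub>R y) \<le> 1"
  using assms(1)[unfolded SQ_def SQ_gen_def, rule_format, of A] assms(2,3) that by blast

lemma SQ_witness_for_unit_ball:
  fixes Z :: "'b::real_normed_vector set"
  assumes SQ: "SQ r r k Z" and "subspace Z"
    and B: "B \<subseteq> Z" "\<And>x. x \<in> B \<Longrightarrow> norm x \<le> 1" "(card_of B, k) \<in> ordLess"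
    and t: "0 < t" "t \<le> r" "r \<le> 1"
  obtains y where "y \<in> Z" "r \<le> norm y" "norm y \<le> 1"
    "\<And>x. x \<in> B \<Longrightarrow> norm (t *\<^sub>R x + y) \<le> 1 \<and> norm (t *\<^sub>R x - y) \<le> 1"
proof -
  \<comment> \<open>the largest scale for which \<open>norm_scaleR_add_le_one\<close> applies to all \<open>a = t * c\<close>, \<open>0 \<le> c \<le> 1\<close>\<close>
  define s where "s = 1 - t * (1 - r) / r"
  have "r > 0" using t by linarith
  have "t * (1 - r) / r \<le> 1 - r"
    using t \<open>r > 0\<close> by (simp add: divide_le_eq mult_right_mono mult.commute)
  moreover have "0 \<le> t * (1 - r) / r" using t \<open>r > 0\<close> by simp
  ultimately have s: "r \<le> s" "s \<le> 1" unfolding s_def by linarith+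
  have card: "(card_of (sgn ` (B - {0})), k) \<in> ordLess"
    using card_of_image[of sgn "B - {0}"] card_of_mono1[of "B - {0}" B] B(3)
    by (meson Diff_subset ordLeq_ordLess_trans ordLeq_transitive)
  have units: "sgn ` (B - {0}) \<subseteq> {z \<in> Z. norm z = 1}"
    using B(1) \<open>subspace Z\<close> by (auto simp: sgn_div_norm norm_sgn subspace_scale)
  obtain Y where Y: "Y \<in> Z" "norm Y = 1"
    and SQ_Y: "\<And>u. u \<in> sgn ` (B - {0}) \<Longrightarrow>
                 norm (r *\<^sub>R u + r *\<^sub>R Y) \<le> 1 \<and> norm (r *\<^sub>R u + (- r) *\<^sub>R Y) \<le> 1"
    by (rule SQE[OF SQ units card]) blast
  have plus_minus: "norm (t *\<^sub>R x + s *\<^sub>R Y) \<le> 1 \<and> norm (t *\<^sub>R x - s *\<^sub>R Y) \<le> 1" if "x \<in> B" for x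
  proof (cases "x = 0")
    case True
    then show ?thesis using Y s \<open>r > 0\<close> by simp
  next
    case False
    have x: "x = norm x *\<^sub>R sgn x" using False by (simp add: sgn_div_norm)
    have a: "0 \<le> t * norm x" "t * norm x \<le> s" "t * norm x / r + (s - t * norm x) \<le> 1"
    proof -
      show "0 \<le> t * norm x" using t by simp
      have "t * norm x \<le> t" using t B(2)[OF that] by (simp add: mult_left_le)
      then show "t * norm x \<le> s" using t s by linarith
      have "t * norm x / r + (s - t * norm x) = 1 - (t - t * norm x) * (1 - r) / r"
        using \<open>r > 0\<close> by (simp add: s_def field_simps)
      also have "\<dots> \<le> 1"
        using \<open>t * norm x \<le> t\<close> t \<open>r > 0\<close> by simp
      finally show "t * norm x / r + (s - t * norm x) \<le> 1" .
    qed
    have "sgn x \<in> sgn ` (B - {0})" using that False by blast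
    from SQ_Y[OF this] have "norm (r *\<^sub>R sgn x + r *\<^sub>R Y) \<le> 1"
      and "norm (r *\<^sub>R sgn x + r *\<^sub>R (- Y)) \<le> 1" by simp_all
    from this[THEN norm_scaleR_add_le_one[rotated, OF _ \<open>r > 0\<close> a]] Y(2)
    show ?thesis by (subst (1 2) x) (simp add: algebra_simps)
  qed
  have "s *\<^sub>R Y \<in> Z" using Y(1) \<open>subspace Z\<close> by (simp add: subspace_scale)
  moreover have "norm (s *\<^sub>R Y) = s" using Y(2) s \<open>r > 0\<close> by simp
  ultimately show thesis using plus_minus s by (intro that) auto
qed

lemma linf_norm_upper:
  assumes "x \<in> linf I X" "\<alpha> \<in> I"
  shows "norm (x \<alpha>) \<le> linf_norm I x"
proof -
  have "bounded (x ` I)" using assms(1) unfolding linf_def by blast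
  then have "bdd_above ((\<lambda>\<alpha>. norm (x \<alpha>)) ` I)"
    by (auto simp: bounded_iff intro: bdd_aboveI2)
  then show ?thesis unfolding linf_norm_def using assms(2) by (rule cSUP_upper2) simp
qed

lemma linf_norm_le:
  assumes "I \<noteq> {}" "\<And>\<alpha>. \<alpha> \<in> I \<Longrightarrow> norm (x \<alpha>) \<le> c"
  shows "linf_norm I x \<le> c"
  unfolding linf_norm_def using assms by (rule cSUP_least)

lemma linf_norm_eq_1:
  assumes le: "\<And>\<alpha>. \<alpha> \<in> I \<Longrightarrow> norm (x \<alpha>) \<le> 1"
    and approx: "\<And>\<epsilon>. 0 < \<epsilon> \<Longrightarrow> \<exists>\<alpha>\<in>I. 1 - \<epsilon> < norm (x \<alpha>)"
  shows "linf_norm I x = 1"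
proof (rule antisym)
  have "I \<noteq> {}" using approx[of 1] by auto
  then show "linf_norm I x \<le> 1" using le by (rule linf_norm_le)
  have bdd: "bdd_above ((\<lambda>\<alpha>. norm (x \<alpha>)) ` I)" by (rule bdd_aboveI2) (rule le)
  show "1 \<le> linf_norm I x"
  proof (rule ccontr)
    assume "\<not> 1 \<le> linf_norm I x"
    then obtain \<alpha> where "\<alpha> \<in> I" "linf_norm I x < norm (x \<alpha>)"
      using approx[of "1 - linf_norm I x"] by auto
    with cSUP_upper[OF \<open>\<alpha> \<in> I\<close> bdd] show False unfolding linf_norm_def by simp
  qed
qed

definition extend_by_zero :: "(nat \<Rightarrow> 'a) \<Rightarrow> (nat \<Rightarrow> 'b::zero) \<Rightarrow> 'a \<Rightarrow> 'b" where
  "extend_by_zero f z \<alpha> = (if \<alpha> \<in> range f then z (inv f \<alpha>) else 0)"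

lemma extend_by_zero_apply [simp]: "inj f \<Longrightarrow> extend_by_zero f z (f n) = z n"
  by (simp add: extend_by_zero_def)

lemma extend_by_zero_outside: "\<alpha> \<notin> range f \<Longrightarrow> extend_by_zero f z \<alpha> = 0"
  by (simp add: extend_by_zero_def)

lemma norm_extend_by_zero_le:
  assumes "inj f" "\<And>n. norm (z n) \<le> C"
  shows "norm (extend_by_zero f z \<alpha>) \<le> C"
proof -
  have "0 \<le> C" using assms(2)[of 0] by (meson norm_ge_zero order_trans)
  then show ?thesis
    using assms extend_by_zero_outside[of \<alpha> f z] by (cases "\<alpha> \<in> range f") auto
qed

lemma extend_by_zero_in_linf:
  assumes "inj f" "range f \<subseteq> I" "\<And>\<alpha>. \<alpha> \<in> I \<Longrightarrow> subspace (X \<alpha>)"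
    and "\<And>n. z n \<in> X (f n)" "\<And>n. norm (z n) \<le> C"
  shows "extend_by_zero f z \<in> linf I X"
proof -
  have "norm (extend_by_zero f z \<alpha>) \<le> C" for \<alpha>
    using assms(1,5) by (rule norm_extend_by_zero_le)
  moreover have "extend_by_zero f z \<alpha> \<in> X \<alpha>" if "\<alpha> \<in> I" for \<alpha>
    using assms extend_by_zero_outside[of \<alpha> f z] that
    by (cases "\<alpha> \<in> range f") (auto simp: subspace_0)
  moreover have "extend_by_zero f z \<alpha> = 0" if "\<alpha> \<notin> I" for \<alpha>
    using assms(2) that by (intro extend_by_zero_outside) blast
  ultimately show ?thesis unfolding linf_def bounded_iff by blast
qed

lemma linf_norm_extend_by_zero_eq_1:
  assumes "inj f" "range f \<subseteq> I" "\<And>n. norm (z n) \<le> 1"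
    and approx: "\<And>\<epsilon>. 0 < \<epsilon> \<Longrightarrow> \<exists>n. 1 - \<epsilon> < norm (z n)"
  shows "linf_norm I (extend_by_zero f z) = 1"
proof (rule linf_norm_eq_1)
  show "norm (extend_by_zero f z \<alpha>) \<le> 1" for \<alpha>
    using assms(1,3) by (rule norm_extend_by_zero_le)
  fix \<epsilon> :: real assume "0 < \<epsilon>"
  then obtain n where "1 - \<epsilon> < norm (extend_by_zero f z (f n))" using approx assms(1) by auto
  then show "\<exists>\<alpha>\<in>I. 1 - \<epsilon> < norm (extend_by_zero f z \<alpha>)" using assms(2) by blast
qed

lemma SQ_witness_at_coordinate:
  assumes SQ: "SQ r r k (X \<alpha>)" and "subspace (X \<alpha>)" "\<alpha> \<in> I"
    and A: "A \<subseteq> {x \<in> linf I X. linf_norm I x = 1}" "(card_of A, k) \<in> ordLess"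
    and t: "0 < t" "t \<le> r" "r \<le> 1"
  obtains y where "y \<in> X \<alpha>" "r \<le> norm y" "norm y \<le> 1"
    "\<And>x. x \<in> A \<Longrightarrow> norm (t *\<^sub>R x \<alpha> + y) \<le> 1 \<and> norm (t *\<^sub>R x \<alpha> - y) \<le> 1"
proof -
  let ?B = "(\<lambda>x. x \<alpha>) ` A"
  have B_unit: "norm v \<le> 1" if "v \<in> ?B" for v
  proof -
    from that obtain x where "x \<in> A" "v = x \<alpha>" by blast
    then show ?thesis using A(1) linf_norm_upper[of x I X \<alpha>] \<open>\<alpha> \<in> I\<close> by auto
  qed
  have "?B \<subseteq> X \<alpha>" using A(1) \<open>\<alpha> \<in> I\<close> unfolding linf_def by auto
  moreover have "(card_of ?B, k) \<in> ordLess"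
    using card_of_image A(2) ordLeq_ordLess_trans by blast
  ultimately obtain y where y: "y \<in> X \<alpha>" "r \<le> norm y" "norm y \<le> 1"
    and y_B: "\<And>v. v \<in> ?B \<Longrightarrow> norm (t *\<^sub>R v + y) \<le> 1 \<and> norm (t *\<^sub>R v - y) \<le> 1"
    using SQ_witness_for_unit_ball[OF SQ \<open>subspace (X \<alpha>)\<close> _ B_unit _ t] by blast
  show thesis by (rule that[OF y]) (use y_B in blast)
qed

lemma SQ_linf_from_sequence:
  fixes f :: "nat \<Rightarrow> 'a" and X :: "'a \<Rightarrow> 'b::real_normed_vector set"
  assumes subspace: "\<And>\<alpha>. \<alpha> \<in> I \<Longrightarrow> subspace (X \<alpha>)"
    and f: "inj f" "range f \<subseteq> I" and SQ: "\<And>n. SQ (r n) (r n) k (X (f n))"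
    and t: "0 < t" "\<And>n. t \<le> r n" "\<And>n. r n \<le> 1"
    and r_approx: "\<And>\<epsilon>. 0 < \<epsilon> \<Longrightarrow> \<exists>n. 1 - \<epsilon> < r n"
  shows "SQ_linf t 1 k I X"
  unfolding SQ_linf_def SQ_gen_def
proof (intro allI impI)
  fix A assume A: "A \<subseteq> {x \<in> linf I X. linf_norm I x = 1} \<and> (card_of A, k) \<in> ordLess"
  have A_le: "norm (x \<alpha>) \<le> 1" if "x \<in> A" "\<alpha> \<in> I" for x \<alpha>
    using A linf_norm_upper[of x I X \<alpha>] that by auto
  have "\<exists>y. y \<in> X (f n) \<and> r n \<le> norm y \<and> norm y \<le> 1 \<and>
          (\<forall>x\<in>A. norm (t *\<^sub>R x (f n) + y) \<le> 1 \<and> norm (t *\<^sub>R x (f n) - y) \<le> 1)" for n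
  proof -
    have "f n \<in> I" using f(2) by auto
    obtain y where "y \<in> X (f n)" "r n \<le> norm y" "norm y \<le> 1"
      "\<And>x. x \<in> A \<Longrightarrow> norm (t *\<^sub>R x (f n) + y) \<le> 1 \<and> norm (t *\<^sub>R x (f n) - y) \<le> 1"
      using SQ_witness_at_coordinate[where X = X and \<alpha> = "f n",
          OF SQ[of n] subspace[OF \<open>f n \<in> I\<close>] \<open>f n \<in> I\<close> _ _ t(1) t(2)[of n] t(3)[of n]] A
      by blast
    then show ?thesis by blast
  qed
  then obtain z where z: "\<And>n. z n \<in> X (f n)" "\<And>n. r n \<le> norm (z n)" "\<And>n. norm (z n) \<le> 1"
    and z_SQ: "\<And>n x. x \<in> A \<Longrightarrow> norm (t *\<^sub>R x (f n) + z n) \<le> 1 \<and> norm (t *\<^sub>R x (f n) - z n) \<le> 1"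
    by metis
  define y where "y = extend_by_zero f z"
  have y_linf: "y \<in> linf I X"
    unfolding y_def using f subspace z(1,3) by (rule extend_by_zero_in_linf)
  have "linf_norm I y = 1"
    unfolding y_def using f z(3)
  proof (rule linf_norm_extend_by_zero_eq_1)
    show "\<exists>n. 1 - \<epsilon> < norm (z n)" if "0 < \<epsilon>" for \<epsilon>
      using r_approx[OF that] z(2) by (meson less_le_trans)
  qed
  moreover have "norm (t *\<^sub>R x \<alpha> + y \<alpha>) \<le> 1 \<and> norm (t *\<^sub>R x \<alpha> - y \<alpha>) \<le> 1"
    if "x \<in> A" "\<alpha> \<in> I" for x \<alpha>
  proof (cases "\<alpha> \<in> range f")
    case True
    then obtain n where "\<alpha> = f n" by blast
    then show ?thesis using z_SQ[OF \<open>x \<in> A\<close>, of n] f(1) unfolding y_def by simp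
  next
    case False
    have "t * norm (x \<alpha>) \<le> 1" using A_le[OF that] t(1) t(2)[of 0] t(3)[of 0]
      by (simp add: mult_le_one)
    then show ?thesis using False t(1) unfolding y_def extend_by_zero_outside[OF False] by simp
  qed
  then have "linf_norm I (\<lambda>\<alpha>. t *\<^sub>R x \<alpha> + \<sigma> *\<^sub>R y \<alpha>) \<le> 1"
    if "x \<in> A" "\<sigma> = 1 \<or> \<sigma> = - 1" for x \<sigma>
    using that f(2) by (intro linf_norm_le) auto
  ultimately show "\<exists>y\<in>linf I X. linf_norm I y = 1 \<and>
      (\<forall>x\<in>A. linf_norm I (\<lambda>\<alpha>. t *\<^sub>R x \<alpha> + 1 *\<^sub>R y \<alpha>) \<le> 1 \<and>
              linf_norm I (\<lambda>\<alpha>. t *\<^sub>R x \<alpha> + (- 1) *\<^sub>R y \<alpha>) \<le> 1)"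
    using y_linf by blast
qed

theorem theorem6p9:
  fixes I :: "'a set" and X :: "'a \<Rightarrow> 'b::banach set" and k :: "'c rel"
  assumes banach: "\<And>\<alpha>. \<alpha> \<in> I \<Longrightarrow> subspace (X \<alpha>) \<and> closed (X \<alpha>)"
    and kappa: "Card_order k" "\<not> finite (Field k)"
    and hyp: "\<And>r. 0 < r \<Longrightarrow> r < 1 \<Longrightarrow> infinite {\<alpha> \<in> I. SQ r r k (X \<alpha>)}"
  shows "SQ_lt1_1_linf k I X"
  unfolding SQ_lt1_1_linf_def
proof (intro allI impI)
  fix t :: real assume t: "0 < t \<and> t < 1"
  define r where "r n = 1 - (1 - t) / (real n + 1)" for n :: nat
  have r: "t \<le> r n" "r n < 1" for n
    using t by (auto simp: r_def field_simps intro: mult_left_le_one_le)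
  define B where "B n = {\<alpha> \<in> I. SQ (r n) (r n) k (X \<alpha>)}" for n
  have "infinite (B n)" for n
    unfolding B_def using t r[of n] by (intro hyp) auto
  then obtain f where "inj f" and f: "\<And>n. f n \<in> B n"
    using injective_choice_from_infinite_family by blast
  have "\<exists>n. 1 - \<epsilon> < r n" if "0 < \<epsilon>" for \<epsilon> :: real
  proof -
    obtain n where "1 / real (Suc n) < \<epsilon>" using nat_approx_posE[OF \<open>0 < \<epsilon>\<close>] .
    moreover have "(1 - t) / (real n + 1) \<le> 1 / real (Suc n)"
      using t by (simp add: divide_right_mono add.commute)
    ultimately show ?thesis unfolding r_def by (intro exI[of _ n]) linarith
  qed
  with banach \<open>inj f\<close> f t r show "SQ_linf t 1 k I X"
    unfolding B_def by (intro SQ_linf_from_sequence[where f = f and r = r]) (auto intro: less_imp_le)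
qed

end
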